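(* Let $V$ be an infinite-dimensional vector space over a field $\mathbb{F}$. Let $a,b,c$ be quadratic endomorphisms of $V$, and let $\lambda\in\mathbb{F}$ and $w\in\mathrm{End}(V)$ be such that $\lambda\,\mathrm{id}_V+w=a+b+c$ and $\operatorname{rk}w<\dim V$. Let $W$ be a linear subspace of $V$ with $\operatorname{im}w\subset W$ and $\dim W<\dim V$. Then there exists a linear subspace $\overline{W}$ of $V$ with $W\subset\overline{W}$, $\dim\overline{W}<\dim V$, and $\overline{W}$ stable under $a$, $b$ and $c$. Moreover, if $W$ is finite-dimensional then $\overline{W}$ can be chosen finite-dimensional.
   Context: An endomorphism $e$ of $V$ is quadratic if $p(e)=0$ for some polynomial $p\in\mathbb{F}[t]$ of degree $2$. *)

theory Defs
  imports Main "HOL-Computational_Algebra.Polynomial"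
begin

text \<open>Vector spaces are given by a scalar multiplication \<open>scale\<close> satisfying
  the library locale \<open>vector_space\<close>; endomorphisms are maps \<open>f\<close> with
  \<open>linear scale scale f\<close>.\<close>

definition poly_endo :: "('a::field \<Rightarrow> 'v::ab_group_add \<Rightarrow> 'v) \<Rightarrow> 'a poly \<Rightarrow> ('v \<Rightarrow> 'v) \<Rightarrow> 'v \<Rightarrow> 'v" where
  "poly_endo scale p e = (\<lambda>v. \<Sum>i\<le>degree p. scale (coeff p i) ((e ^^ i) v))"

definition quadratic_endo :: "('a::field \<Rightarrow> 'v::ab_group_add \<Rightarrow> 'v) \<Rightarrow> ('v \<Rightarrow> 'v) \<Rightarrow> bool" where
  "quadratic_endo scale e \<longleftrightarrow> (\<exists>p::'a poly. degree p = 2 \<and> (\<forall>v. poly_endo scale p e v = 0))"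

definition is_basis_of :: "('a::field \<Rightarrow> 'v::ab_group_add \<Rightarrow> 'v) \<Rightarrow> 'v set \<Rightarrow> 'v set \<Rightarrow> bool" where
  "is_basis_of scale B W \<longleftrightarrow> B \<subseteq> W \<and> \<not> module.dependent scale B \<and> module.span scale B = W"

definition cdim :: "('a::field \<Rightarrow> 'v::ab_group_add \<Rightarrow> 'v) \<Rightarrow> 'v set \<Rightarrow> 'v rel" where
  "cdim scale W = card_of (SOME B. is_basis_of scale B W)"

definition fin_dim :: "('a::field \<Rightarrow> 'v::ab_group_add \<Rightarrow> 'v) \<Rightarrow> 'v set \<Rightarrow> bool" where
  "fin_dim scale W \<longleftrightarrow> (\<exists>B. finite B \<and> module.span scale B = W)"

end

theory Submission
  imports Defs
begin

unbundle cardinal_syntax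

text \<open>Put \<open>U = span (W + aW + bW + abW + baW)\<close>. Since \<open>im w \<subseteq> W\<close>, the relation
  \<open>a + b + c = \<lambda> + w\<close> shows that \<open>U\<close> is stable under \<open>c\<close> once it is stable under \<open>a\<close> and \<open>b\<close>.
  Stability under \<open>a\<close> is clear except for \<open>aba\<close>, and there the quadratic relations of \<open>a\<close>, \<open>b\<close>
  and \<open>c\<close> together with \<open>a + b = \<lambda> + w - c\<close> show that the anticommutator \<open>ab + ba\<close> maps any
  vector \<open>y\<close> with \<open>y, ay, by \<in> U\<close> into \<open>U\<close>; apply this to \<open>y = ax\<close> for \<open>x \<in> W\<close>.
  Finally \<open>U\<close> is spanned by the images of a basis of \<open>W\<close> under five maps, so its dimension is
  at most that of \<open>W\<close> when \<open>W\<close> is infinite-dimensional, and finite when \<open>W\<close> is.\<close>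

lemma finite_card_of_ordLess_infinite: "finite A \<Longrightarrow> infinite B \<Longrightarrow> |A| <o |B|"
  using finite_ordLess_infinite[OF card_of_Well_order card_of_Well_order] by (simp add: Field_card_of)

sublocale vector_space \<subseteq> endo: vector_space_pair scale scale ..

context vector_space
begin

lemma quadratic_endo_square:
  assumes "quadratic_endo scale e"
  obtains \<alpha> \<beta> where "\<And>v. e (e v) = \<alpha> *s v + \<beta> *s e v"
proof -
  obtain p :: "'a poly" where deg: "degree p = 2" and ann: "\<And>v. poly_endo scale p e v = 0"
    using assms unfolding quadratic_endo_def by blast
  have lead: "coeff p 2 \<noteq> 0"
    using deg by (metis leading_coeff_0_iff degree_0 zero_neq_numeral)
  have rel: "coeff p 0 *s v + coeff p 1 *s e v + coeff p 2 *s e (e v) = 0" for v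
    using ann[of v] deg
    by (simp add: poly_endo_def numeral_2_eq_2 atMost_Suc add.assoc add.commute add.left_commute)
  show ?thesis
  proof
    fix v
    have "coeff p 2 *s e (e v) = - (coeff p 0 *s v) - coeff p 1 *s e v"
      using rel[of v] by (simp add: eq_neg_iff_add_eq_0 algebra_simps)
    then have "e (e v) = inverse (coeff p 2) *s (- (coeff p 0 *s v) - coeff p 1 *s e v)"
      using lead by (metis scale_left_imp_eq scale_scale right_inverse scale_one)
    then show "e (e v) = (- coeff p 0 / coeff p 2) *s v + (- coeff p 1 / coeff p 2) *s e v"
      by (simp add: scale_right_diff_distrib divide_inverse mult.commute)
  qed
qed

lemma anticommutator_mem_subspace:
  assumes la: "Vector_Spaces.linear scale scale a" and lb: "Vector_Spaces.linear scale scale b"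
    and qa: "\<And>v. a (a v) = \<alpha>a *s v + \<beta>a *s a v"
    and qb: "\<And>v. b (b v) = \<alpha>b *s v + \<beta>b *s b v"
    and qc: "\<And>v. c (c v) = \<alpha>c *s v + \<beta>c *s c v"
    and sum: "\<And>v. lam *s v + w v = a v + b v + c v"
    and X: "subspace X" and wX: "\<And>v. w v \<in> X" "\<And>v. a (w v) \<in> X" "\<And>v. b (w v) \<in> X"
    and y: "y \<in> X" "a y \<in> X" "b y \<in> X"
  shows "a (b y) + b (a y) \<in> X"
proof -
  note closed = subspace_add[OF X] subspace_scale[OF X] subspace_diff[OF X]
  have c_eq: "c v = lam *s v + w v - a v - b v" for v
    using sum[of v] by (simp add: algebra_simps)
  have cy: "c y \<in> X"
    unfolding c_eq using y wX by (intro closed) auto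
  have "a (c y) + b (c y) = lam *s c y + w (c y) - c (c y)"
    using sum[of "c y"] by (simp add: algebra_simps)
  then have acy_bcy: "a (c y) + b (c y) \<in> X"
    unfolding qc using cy wX y by (auto intro!: closed)
  \<comment> \<open>\<open>(a + b)\<^sup>2 y\<close>, rewritten through \<open>a + b = \<lambda> + w - c\<close>\<close>
  have "a (a y + b y) + b (a y + b y) = lam *s a y + lam *s b y + (a (w y) + b (w y)) - (a (c y) + b (c y))"
  proof -
    have "a y + b y = lam *s y + w y - c y"
      using sum[of y] by (simp add: algebra_simps)
    then show ?thesis
      by (simp only:) (simp add: endo.linear_add[OF la] endo.linear_add[OF lb] endo.linear_diff[OF la]
          endo.linear_diff[OF lb] endo.linear_scale[OF la] endo.linear_scale[OF lb] algebra_simps)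
  qed
  then have square: "a (a y + b y) + b (a y + b y) \<in> X"
    using acy_bcy wX y by (auto intro!: closed)
  have "a (b y) + b (a y) = (a (a y + b y) + b (a y + b y)) - a (a y) - b (b y)"
    by (simp add: endo.linear_add[OF la] endo.linear_add[OF lb] algebra_simps)
  also have "\<dots> \<in> X"
    unfolding qa qb using square y by (auto intro!: closed)
  finally show ?thesis .
qed

lemma span_short_words_image_stable:
  fixes a b c w :: "'b \<Rightarrow> 'b" and W :: "'b set"
  defines "U \<equiv> span (\<Union>f\<in>{id, a, b, a \<circ> b, b \<circ> a}. f ` W)"
  assumes la: "Vector_Spaces.linear scale scale a" and lb: "Vector_Spaces.linear scale scale b"
    and qa: "\<And>v. a (a v) = \<alpha>a *s v + \<beta>a *s a v"
    and qb: "\<And>v. b (b v) = \<alpha>b *s v + \<beta>b *s b v"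
    and qc: "\<And>v. c (c v) = \<alpha>c *s v + \<beta>c *s c v"
    and sum: "\<And>v. lam *s v + w v = a v + b v + c v"
    and imw: "range w \<subseteq> W"
  shows "a ` U \<subseteq> U"
proof -
  have U: "subspace U"
    unfolding U_def by simp
  note closed = subspace_add[OF U] subspace_scale[OF U] subspace_diff[OF U]
  have words: "x \<in> U" "a x \<in> U" "b x \<in> U" "a (b x) \<in> U" "b (a x) \<in> U" if "x \<in> W" for x
    unfolding U_def using that by (auto intro: span_base)
  have wU: "w v \<in> U" "a (w v) \<in> U" "b (w v) \<in> U" for v
    using imw words by auto
  have "a x \<in> U" "a (a x) \<in> U" "a (b x) \<in> U" "a (a (b x)) \<in> U" "a (b (a x)) \<in> U"
    if x: "x \<in> W" for x
  proof -
    show ax: "a x \<in> U" and "a (b x) \<in> U"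
      using words x by auto
    show aax: "a (a x) \<in> U" and "a (a (b x)) \<in> U"
      unfolding qa using words x by (auto intro!: closed)
    have bax: "b (a x) \<in> U"
      using words x by auto
    have "a (b (a x)) + b (a (a x)) \<in> U"
      by (rule anticommutator_mem_subspace[OF la lb qa qb qc sum U wU ax aax bax])
    moreover have "b (a (a x)) \<in> U"
      unfolding qa endo.linear_add[OF lb] endo.linear_scale[OF lb] using words x by (auto intro!: closed)
    ultimately show "a (b (a x)) \<in> U"
      using subspace_diff[OF U] by fastforce
  qed
  then have "a ` (\<Union>f\<in>{id, a, b, a \<circ> b, b \<circ> a}. f ` W) \<subseteq> U"
    by auto
  then have "span (a ` (\<Union>f\<in>{id, a, b, a \<circ> b, b \<circ> a}. f ` W)) \<subseteq> U"
    using U by (rule span_minimal)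
  then show ?thesis
    unfolding U_def endo.linear_span_image[OF la] .
qed

lemma subspace_stable_third_summand:
  assumes U: "subspace U" and aU: "a ` U \<subseteq> U" and bU: "b ` U \<subseteq> U" and wU: "range w \<subseteq> U"
    and sum: "\<And>v. lam *s v + w v = a v + b v + c v"
  shows "c ` U \<subseteq> U"
proof clarify
  fix u assume u: "u \<in> U"
  have "c u = lam *s u + w u - a u - b u"
    using sum[of u] by (simp add: algebra_simps)
  also have "\<dots> \<in> U"
    using u aU bU wU by (intro subspace_diff[OF U] subspace_add[OF U] subspace_scale[OF U]) auto
  finally show "c u \<in> U" .
qed

lemma span_short_words_invariant:
  fixes a b c w :: "'b \<Rightarrow> 'b" and W :: "'b set"
  defines "U \<equiv> span (\<Union>f\<in>{id, a, b, a \<circ> b, b \<circ> a}. f ` W)"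
  assumes la: "Vector_Spaces.linear scale scale a" and lb: "Vector_Spaces.linear scale scale b"
    and qa: "\<And>v. a (a v) = \<alpha>a *s v + \<beta>a *s a v"
    and qb: "\<And>v. b (b v) = \<alpha>b *s v + \<beta>b *s b v"
    and qc: "\<And>v. c (c v) = \<alpha>c *s v + \<beta>c *s c v"
    and sum: "\<And>v. lam *s v + w v = a v + b v + c v"
    and imw: "range w \<subseteq> W"
  shows "a ` U \<subseteq> U" and "b ` U \<subseteq> U" and "c ` U \<subseteq> U"
proof -
  show aU: "a ` U \<subseteq> U"
    unfolding U_def by (rule span_short_words_image_stable[OF la lb qa qb qc sum imw])
  have sum_ba: "\<And>v. lam *s v + w v = b v + a v + c v"
    using sum by (simp add: ac_simps)
  have "{id, b, a, b \<circ> a, a \<circ> b} = {id, a, b, a \<circ> b, b \<circ> a}"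
    by auto
  then show bU: "b ` U \<subseteq> U"
    using span_short_words_image_stable[OF lb la qb qa qc sum_ba imw] unfolding U_def by simp
  have "W \<subseteq> U"
    unfolding U_def using span_superset by force
  then show "c ` U \<subseteq> U"
    using imw unfolding U_def
    by (intro subspace_stable_third_summand[OF subspace_span aU[unfolded U_def] bU[unfolded U_def] _ sum]) blast
qed

lemma span_finite_subset:
  assumes "x \<in> span T"
  obtains F where "finite F" "F \<subseteq> T" "x \<in> span F"
  using assms unfolding span_explicit[of T] by (blast intro: span_sum span_scale span_base)

lemma independent_card_of_ordLeq_spanning:
  assumes ind: "independent B" and spans: "span B = span S" and inf: "infinite S"
  shows "|B| \<le>o |S|"
proof -
  have "\<forall>s\<in>S. \<exists>F. finite F \<and> F \<subseteq> B \<and> s \<in> span F"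
    using spans span_superset span_finite_subset by (metis subsetD)
  then obtain F where F: "\<And>s. s \<in> S \<Longrightarrow> finite (F s) \<and> F s \<subseteq> B \<and> s \<in> span (F s)"
    by metis
  have "B \<subseteq> (\<Union>s\<in>S. F s)"
  proof
    fix x assume x: "x \<in> B"
    have "S \<subseteq> span (\<Union>s\<in>S. F s)"
      using F by (meson UN_upper span_mono subset_iff)
    then have x_span: "x \<in> span (\<Union>s\<in>S. F s)"
      using x spans span_superset span_minimal[OF _ subspace_span] by blast
    show "x \<in> (\<Union>s\<in>S. F s)"
    proof (rule ccontr)
      assume "x \<notin> (\<Union>s\<in>S. F s)"
      then have "span (\<Union>s\<in>S. F s) \<subseteq> span (B - {x})"
        using F by (intro span_mono) auto
      then show False
        using x_span x ind dependent_def by blast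
    qed
  qed
  moreover have "|\<Union>s\<in>S. F s| \<le>o |S|"
  proof (rule card_of_UNION_ordLeq_infinite[OF inf])
    show "|S| \<le>o |S|"
      by (rule ordIso_imp_ordLeq[OF card_of_refl])
    show "\<forall>s\<in>S. |F s| \<le>o |S|"
      using F inf by (blast intro: ordLess_imp_ordLeq finite_card_of_ordLess_infinite)
  qed
  ultimately show ?thesis
    using card_of_mono1 ordLeq_transitive by blast
qed

lemma span_UN_image_span:
  assumes lin: "\<And>f. f \<in> F \<Longrightarrow> Vector_Spaces.linear scale scale f"
  shows "span (\<Union>f\<in>F. f ` span B) = span (\<Union>f\<in>F. f ` B)"
proof -
  have "f ` span B \<subseteq> span (\<Union>f\<in>F. f ` B)" if "f \<in> F" for f
    unfolding endo.linear_span_image[OF lin[OF that], symmetric] using that by (intro span_mono) blast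
  then have "span (\<Union>f\<in>F. f ` span B) \<subseteq> span (\<Union>f\<in>F. f ` B)"
    by (intro span_minimal subspace_span UN_least)
  moreover have "span (\<Union>f\<in>F. f ` B) \<subseteq> span (\<Union>f\<in>F. f ` span B)"
    using span_superset by (intro span_mono) blast
  ultimately show ?thesis
    by (rule subset_antisym)
qed

lemma cdim_basis:
  assumes "subspace X"
  obtains B where "is_basis_of scale B X" "cdim scale X = |B|"
proof -
  have "\<exists>B. is_basis_of scale B X"
    unfolding is_basis_of_def using assms by (metis basis_exists span_minimal subset_antisym)
  then have "is_basis_of scale (SOME B. is_basis_of scale B X) X"
    by (rule someI_ex)
  then show ?thesis
    by (rule that) (simp add: cdim_def)
qed

lemma fin_dim_span_UN_image:
  assumes lin: "\<And>f. f \<in> F \<Longrightarrow> Vector_Spaces.linear scale scale f" and F: "finite F"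
    and W: "fin_dim scale W"
  shows "fin_dim scale (span (\<Union>f\<in>F. f ` W))"
proof -
  obtain B where B: "finite B" "span B = W"
    using W unfolding fin_dim_def by blast
  then have "span (\<Union>f\<in>F. f ` B) = span (\<Union>f\<in>F. f ` W)"
    using span_UN_image_span[OF lin, where B = B] by simp
  then show ?thesis
    unfolding fin_dim_def using B(1) F by (intro exI[of _ "\<Union>f\<in>F. f ` B"]) simp
qed

lemma cdim_span_UN_image_ordLess:
  assumes lin: "\<And>f. f \<in> F \<Longrightarrow> Vector_Spaces.linear scale scale f" and F: "finite F"
    and W: "subspace W" and infdim: "\<not> fin_dim scale UNIV"
    and less: "cdim scale W <o cdim scale UNIV"
  shows "cdim scale (span (\<Union>f\<in>F. f ` W)) <o cdim scale UNIV"
proof -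
  obtain BW where BW: "is_basis_of scale BW W" "cdim scale W = |BW|"
    using cdim_basis[OF W] .
  obtain BU where BU: "is_basis_of scale BU (span (\<Union>f\<in>F. f ` W))"
    "cdim scale (span (\<Union>f\<in>F. f ` W)) = |BU|"
    using cdim_basis[OF subspace_span] .
  obtain BV where BV: "is_basis_of scale BV UNIV" "cdim scale UNIV = |BV|"
    using cdim_basis[OF subspace_UNIV] .
  define S where "S = (\<Union>f\<in>F. f ` BW)"
  have BU_S: "independent BU" "span BU = span S"
    using BU(1) BW(1) span_UN_image_span[OF lin, where B = BW] unfolding is_basis_of_def S_def
    by (simp_all add: span_span)
  have infBV: "infinite BV"
    using BV infdim unfolding is_basis_of_def fin_dim_def by blast
  have "|BU| <o |BV|"
  proof (cases "finite S")
    case True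
    then have "finite BU"
      using independent_span_bound[OF True BU_S(1)] BU_S(2) span_superset by blast
    then show ?thesis
      using infBV by (rule finite_card_of_ordLess_infinite)
  next
    case False
    have infBW: "infinite BW"
    proof
      assume "finite BW"
      with F False show False
        by (simp add: S_def)
    qed
    have "|S| \<le>o |BW|"
      unfolding S_def
    proof (rule card_of_UNION_ordLeq_infinite[OF infBW])
      show "|F| \<le>o |BW|"
        using F infBW by (blast intro: ordLess_imp_ordLeq finite_card_of_ordLess_infinite)
      show "\<forall>f\<in>F. |f ` BW| \<le>o |BW|"
        using card_of_image by blast
    qed
    then have "|BU| \<le>o |BW|"
      using independent_card_of_ordLeq_spanning[OF BU_S False] ordLeq_transitive by blast
    then show ?thesis
      using ordLeq_ordLess_trans less BW(2) BV(2) by simp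
  qed
  then show ?thesis
    using BU(2) BV(2) by simp
qed

end

theorem lemma1:
  fixes scale :: "'a::field \<Rightarrow> 'v::ab_group_add \<Rightarrow> 'v"
    and a b c w :: "'v \<Rightarrow> 'v" and lam :: 'a and W :: "'v set"
  assumes vs: "vector_space scale"
    and infdim: "\<not> fin_dim scale UNIV"
    and lin_a: "Vector_Spaces.linear scale scale a" and lin_b: "Vector_Spaces.linear scale scale b"
    and lin_c: "Vector_Spaces.linear scale scale c" and lin_w: "Vector_Spaces.linear scale scale w"
    and qa: "quadratic_endo scale a" and qb: "quadratic_endo scale b"
    and qc: "quadratic_endo scale c"
    and sum: "\<And>v. scale lam v + w v = a v + b v + c v"
    and rk: "(cdim scale (range w), cdim scale UNIV) \<in> ordLess"
    and subW: "module.subspace scale W"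
    and imw: "range w \<subseteq> W"
    and dimW: "(cdim scale W, cdim scale UNIV) \<in> ordLess"
  shows "\<exists>W'. module.subspace scale W' \<and> W \<subseteq> W' \<and> (cdim scale W', cdim scale UNIV) \<in> ordLess
           \<and> a ` W' \<subseteq> W' \<and> b ` W' \<subseteq> W' \<and> c ` W' \<subseteq> W'
           \<and> (fin_dim scale W \<longrightarrow> fin_dim scale W')"
proof -
  interpret V: vector_space scale
    by (rule vs)
  obtain \<alpha>a \<beta>a where qa': "\<And>v. a (a v) = scale \<alpha>a v + scale \<beta>a (a v)"
    using V.quadratic_endo_square[OF qa] by blast
  obtain \<alpha>b \<beta>b where qb': "\<And>v. b (b v) = scale \<alpha>b v + scale \<beta>b (b v)"
    using V.quadratic_endo_square[OF qb] by blast
  obtain \<alpha>c \<beta>c where qc': "\<And>v. c (c v) = scale \<alpha>c v + scale \<beta>c (c v)"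
    using V.quadratic_endo_square[OF qc] by blast
  define F where "F = {id, a, b, a \<circ> b, b \<circ> a}"
  define U where "U = V.span (\<Union>f\<in>F. f ` W)"
  have lin_F: "\<And>f. f \<in> F \<Longrightarrow> Vector_Spaces.linear scale scale f"
    unfolding F_def using lin_a lin_b V.linear_id Vector_Spaces.linear_compose[OF lin_b lin_a]
      Vector_Spaces.linear_compose[OF lin_a lin_b] by auto
  have "finite F"
    unfolding F_def by simp
  then have "(cdim scale U, cdim scale UNIV) \<in> ordLess" and "fin_dim scale W \<longrightarrow> fin_dim scale U"
    unfolding U_def using V.cdim_span_UN_image_ordLess[OF lin_F _ subW infdim dimW]
      V.fin_dim_span_UN_image[OF lin_F] by blast+
  moreover have "W \<subseteq> U"
    unfolding U_def F_def using V.span_superset by force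
  moreover have "a ` U \<subseteq> U" "b ` U \<subseteq> U" "c ` U \<subseteq> U"
    unfolding U_def F_def by (fact V.span_short_words_invariant[OF lin_a lin_b qa' qb' qc' sum imw])+
  ultimately show ?thesis
    using V.subspace_span unfolding U_def by blast
qed

end
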